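(* Let $N=\{1,\dots,n\}$ and let $F:2^N\to\mathbb{R}$ be quasi-submodular. For the sequences $(X_t),(Y_t)$ generated by the maximization procedure (described in the context), $X_t\subseteq Y_t$ for every $t$, i.e., the lattice $[X_t,Y_t]$ is nonempty at every iteration.
   Context: For $A\subseteq N$ and $i\in N$, write $A+i=A\cup\{i\}$, $A-i=A\setminus\{i\}$, and $F(i\mid A)=F(A+i)-F(A)$. $F$ is quasi-submodular if for all $X,Y\subseteq N$ both hold: $F(X\cap Y)\ge F(X)\Rightarrow F(Y)\ge F(X\cup Y)$, and $F(X\cap Y)>F(X)\Rightarrow F(Y)>F(X\cup Y)$. $[A,B]=\{U: A\subseteq U\subseteq B\}$. Maximization procedure: set $X_0=\emptyset$, $Y_0=N$; for $t=0,1,2,\dots$: let $U_t=\{u\in Y_t\setminus X_t: F(u\mid Y_t-u)>0\}$ and $X_{t+1}=X_t\cup U_t$; let $D_t=\{d\in Y_t\setminus X_t: F(d\mid X_t)<0\}$ and $Y_{t+1}=Y_t\setminus D_t$; if $X_{t+1}=X_t$ and $Y_{t+1}=Y_t$, stop and output $[X_t,Y_t]$; otherwise continue with $t+1$. *)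

theory Defs
  imports Complex_Main
begin

definition marg :: "('a set \<Rightarrow> real) \<Rightarrow> 'a \<Rightarrow> 'a set \<Rightarrow> real" where
  "marg F i A = F (insert i A) - F A"

definition quasi_submodular :: "'a set \<Rightarrow> ('a set \<Rightarrow> real) \<Rightarrow> bool" where
  "quasi_submodular N F \<longleftrightarrow>
     (\<forall>X Y. X \<subseteq> N \<longrightarrow> Y \<subseteq> N \<longrightarrow>
        (F (X \<inter> Y) \<ge> F X \<longrightarrow> F Y \<ge> F (X \<union> Y)) \<and>
        (F (X \<inter> Y) > F X \<longrightarrow> F Y > F (X \<union> Y)))"

definition max_step :: "('a set \<Rightarrow> real) \<Rightarrow> 'a set \<times> 'a set \<Rightarrow> 'a set \<times> 'a set" where
  "max_step F XY = (let X = fst XY; Y = snd XY;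
      U = {u \<in> Y - X. marg F u (Y - {u}) > 0};
      D = {d \<in> Y - X. marg F d X < 0}
    in (X \<union> U, Y - D))"

text \<open>(X_t, Y_t), starting from (empty, N). Once the procedure stops the pair is a fixed
  point of max_step, so iterating forever yields exactly the generated pairs, repeated.\<close>
definition max_proc :: "('a set \<Rightarrow> real) \<Rightarrow> 'a set \<Rightarrow> nat \<Rightarrow> 'a set \<times> 'a set" where
  "max_proc F N t = (max_step F ^^ t) ({}, N)"

end

theory Submission
  imports Defs
begin

text \<open>An element cannot be both added and deleted in the same round: by quasi-submodularity
  a negative marginal value at X stays negative at every superset not containing the
  element, in particular at Y_t minus that element.\<close>

lemma quasi_submodular_marg_neg_mono:
  assumes "quasi_submodular N F" and "X \<subseteq> Z" and "u \<notin> Z" and "insert u Z \<subseteq> N"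
    and "marg F u X < 0"
  shows "marg F u Z < 0"
proof -
  have "insert u X \<subseteq> N" "Z \<subseteq> N" using assms(2,4) by auto
  moreover have "insert u X \<inter> Z = X" "insert u X \<union> Z = insert u Z" using assms(2,3) by auto
  ultimately have "F X > F (insert u X) \<longrightarrow> F Z > F (insert u Z)"
    using assms(1) unfolding quasi_submodular_def by metis
  with assms(5) show ?thesis by (simp add: marg_def)
qed

lemma snd_max_step_subset: "snd (max_step F XY) \<subseteq> snd XY"
  by (auto simp: max_step_def Let_def)

lemma fst_max_step_subset_snd:
  assumes "quasi_submodular N F" and "X \<subseteq> Y" and "Y \<subseteq> N"
  shows "fst (max_step F (X, Y)) \<subseteq> snd (max_step F (X, Y))"
proof -
  have still_neg: "marg F u (Y - {u}) < 0" if "u \<in> Y" "u \<notin> X" "marg F u X < 0" for u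
    using quasi_submodular_marg_neg_mono[OF assms(1), of X "Y - {u}" u] that assms(2,3)
    by (auto simp: insert_absorb subset_Diff_insert)
  show ?thesis
    using assms(2) by (auto simp: max_step_def Let_def dest: still_neg)
qed

lemma max_proc_Suc: "max_proc F N (Suc t) = max_step F (max_proc F N t)"
  by (simp add: max_proc_def)

lemma max_proc_invariant:
  assumes "quasi_submodular N F"
  shows "fst (max_proc F N t) \<subseteq> snd (max_proc F N t) \<and> snd (max_proc F N t) \<subseteq> N"
proof (induction t)
  case 0
  show ?case by (simp add: max_proc_def)
next
  case (Suc t)
  obtain X Y where XY: "max_proc F N t = (X, Y)" by fastforce
  with Suc have "X \<subseteq> Y" "Y \<subseteq> N" by auto
  then show ?case
    using fst_max_step_subset_snd[OF assms] snd_max_step_subset[of F "(X, Y)"]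
    by (auto simp: max_proc_Suc XY)
qed

theorem lemma5:
  fixes n :: nat and F :: "nat set \<Rightarrow> real" and t :: nat
  assumes "quasi_submodular {1..n} F"
  shows "fst (max_proc F {1..n} t) \<subseteq> snd (max_proc F {1..n} t)"
  using max_proc_invariant[OF assms] by blast

end
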